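(* Let all rate functions below be monotone chemical. Consider: (MII) the network with reactions $1:\ \mathrm{NI}_1+\mathrm{NE}_1+\mathrm{D}_2\to\mathrm{NI}_1+\mathrm{NE}_2+\mathrm{D}_2$ and $2:\ \mathrm{NI}_2+\mathrm{NE}_2+\mathrm{D}_1\to\mathrm{NI}_2+\mathrm{NE}_1+\mathrm{D}_1$, with ODEs \[ [\dot{\mathrm{NE}}_1]=-r_1([\mathrm{NI}_1],[\mathrm{NE}_1],[\mathrm{D}_2])+r_2([\mathrm{NI}_2],[\mathrm{NE}_2],[\mathrm{D}_1]),\quad [\dot{\mathrm{NE}}_2]=-[\dot{\mathrm{NE}}_1],\quad [\dot{\mathrm{NI}}_1]=[\dot{\mathrm{NI}}_2]=[\dot{\mathrm D}_1]=[\dot{\mathrm D}_2]=0; \] (MIV) the network with reactions $1:\ 2\Lambda_1+\mathrm{D}_2\to\Lambda_1+\Lambda_2+\mathrm{D}_2$ and $2:\ 2\Lambda_2+\mathrm{D}_1\to\Lambda_2+\Lambda_1+\mathrm{D}_1$, with ODEs \[ [\dot\Lambda_1]=-r_1([\Lambda_1],[\mathrm{D}_2])+r_2([\Lambda_2],[\mathrm{D}_1]),\quad [\dot\Lambda_2]=-[\dot\Lambda_1],\quad [\dot{\mathrm D}_1]=[\dot{\mathrm D}_2]=0; \] (MV) the network with reactions $1:\ \Lambda_1+\mathrm{NE}_1+\Lambda_2\to\Lambda_1+\mathrm{NE}_2+\Lambda_2$ and $2:\ \Lambda_2+\mathrm{NE}_2+\Lambda_1\to\Lambda_2+\mathrm{NE}_1+\Lambda_1$,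 with ODEs \[ [\dot{\mathrm{NE}}_1]=-r_1([\Lambda_1],[\mathrm{NE}_1],[\Lambda_2])+r_2([\Lambda_2],[\mathrm{NE}_2],[\Lambda_1]),\quad [\dot{\mathrm{NE}}_2]=-[\dot{\mathrm{NE}}_1],\quad [\dot\Lambda_1]=[\dot\Lambda_2]=0. \] Then each of these three systems admits only one single steady state in each invariant set obtained by fixing the constant species and the conserved sum ($[\mathrm{NE}_1]+[\mathrm{NE}_2]$, resp. $[\Lambda_1]+[\Lambda_2]$), for all choices of monotone reaction functions $r_1,r_2$, and thus none of them has the capacity for differentiation.
   Context: A rate function $r_j$ is monotone chemical if it is nonnegative, positive exactly when all its reactant concentrations are positive, independent of non-reactant concentrations, and has positive partial derivative with respect to each reactant concentration at positive concentrations. Capacity for differentiation means the existence of a homogeneous positive steady state (concentrations of species with indices 1 and 2 equal, under identical rate functions for the two symmetric reactions) at which, for some admissible positive values of the partial derivatives of the rates, the Jacobian restricted to the invariant set is singular, enabling a zero-eigenvalue bifurcation to inhomogeneous steady states. *)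

theory Defs
  imports Complex_Main
begin

definition monotone_chemical :: "'a set \<Rightarrow> (('a \<Rightarrow> real) \<Rightarrow> real) \<Rightarrow> bool" where
  "monotone_chemical Rs R \<longleftrightarrow>
     (\<forall>x. (\<forall>s. 0 \<le> x s) \<longrightarrow> 0 \<le> R x) \<and>
     (\<forall>x. (\<forall>s. 0 \<le> x s) \<longrightarrow> (0 < R x \<longleftrightarrow> (\<forall>s\<in>Rs. 0 < x s))) \<and>
     (\<forall>x y. (\<forall>s\<in>Rs. x s = y s) \<longrightarrow> R x = R y) \<and>
     (\<forall>x. (\<forall>s. 0 < x s) \<longrightarrow>
        (\<forall>s\<in>Rs. \<exists>d>0. ((\<lambda>t. R (x(s := t))) has_real_derivative d) (at (x s))))"

text \<open>Mass-action-type ODE vector field: net stoichiometry vectors g1, g2 times rates.\<close>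
definition rxn_ode :: "('a \<Rightarrow> real) \<Rightarrow> ('a \<Rightarrow> real) \<Rightarrow> (('a \<Rightarrow> real) \<Rightarrow> real)
    \<Rightarrow> (('a \<Rightarrow> real) \<Rightarrow> real) \<Rightarrow> ('a \<Rightarrow> real) \<Rightarrow> ('a \<Rightarrow> real)" where
  "rxn_ode g1 g2 R1 R2 x = (\<lambda>s. g1 s * R1 x + g2 s * R2 x)"

definition steady_state where
  "steady_state g1 g2 R1 R2 x \<longleftrightarrow> rxn_ode g1 g2 R1 R2 x = (\<lambda>_. 0)"

definition positive_state :: "('a \<Rightarrow> real) \<Rightarrow> bool" where
  "positive_state x \<longleftrightarrow> (\<forall>s. 0 < x s)"

definition same_invariant_set :: "'a set \<Rightarrow> 'a \<Rightarrow> 'a \<Rightarrow> ('a \<Rightarrow> real) \<Rightarrow> ('a \<Rightarrow> real) \<Rightarrow> bool" where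
  "same_invariant_set C v1 v2 x y \<longleftrightarrow> (\<forall>s\<in>C. x s = y s) \<and> x v1 + x v2 = y v1 + y v2"

text \<open>Jacobian of the ODE (applied to a vector w), where the partial derivatives of
the rates are given by the parameters a (for reaction 1) and b (for reaction 2).\<close>
definition jac_apply :: "('a \<Rightarrow> real) \<Rightarrow> ('a \<Rightarrow> real) \<Rightarrow> 'a set \<Rightarrow> 'a set
    \<Rightarrow> ('a \<Rightarrow> real) \<Rightarrow> ('a \<Rightarrow> real) \<Rightarrow> ('a \<Rightarrow> real) \<Rightarrow> ('a \<Rightarrow> real)" where
  "jac_apply g1 g2 Rs1 Rs2 a b w =
     (\<lambda>s. g1 s * (\<Sum>t\<in>Rs1. a t * w t) + g2 s * (\<Sum>t\<in>Rs2. b t * w t))"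

text \<open>Capacity for differentiation. sigma swaps indices 1 and 2 of the species.
A homogeneous positive steady state under identical rate functions (R for reaction 1,
R composed with the swap for reaction 2), and admissible positive partial derivatives
making the Jacobian restricted to the tangent space of the invariant set singular.\<close>
definition capacity_for_differentiation ::
  "'a set \<Rightarrow> 'a set \<Rightarrow> ('a \<Rightarrow> real) \<Rightarrow> ('a \<Rightarrow> real) \<Rightarrow> 'a set \<Rightarrow> 'a \<Rightarrow> 'a \<Rightarrow> ('a \<Rightarrow> 'a) \<Rightarrow> bool" where
  "capacity_for_differentiation Rs1 Rs2 g1 g2 C v1 v2 \<sigma> \<longleftrightarrow>
     (\<exists>x R. positive_state x \<and> (\<forall>s. x (\<sigma> s) = x s) \<and>
        monotone_chemical Rs1 R \<and>
        steady_state g1 g2 R (\<lambda>z. R (z \<circ> \<sigma>)) x \<and>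
        (\<exists>a b. (\<forall>s\<in>Rs1. 0 < a s) \<and> (\<forall>s\<in>Rs2. 0 < b s) \<and>
           (\<exists>w. w \<noteq> (\<lambda>_. 0) \<and> (\<forall>s\<in>C. w s = 0) \<and> w v1 + w v2 = 0 \<and>
                jac_apply g1 g2 Rs1 Rs2 a b w = (\<lambda>_. 0))))"

datatype spII = NI1 | NI2 | NE1 | NE2 | D1 | D2

definition MII_Rs1 :: "spII set" where "MII_Rs1 = {NI1, NE1, D2}"
definition MII_Rs2 :: "spII set" where "MII_Rs2 = {NI2, NE2, D1}"
definition MII_g1 :: "spII \<Rightarrow> real" where
  "MII_g1 s = (if s = NE1 then -1 else if s = NE2 then 1 else 0)"
definition MII_g2 :: "spII \<Rightarrow> real" where
  "MII_g2 s = (if s = NE1 then 1 else if s = NE2 then -1 else 0)"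
definition MII_C :: "spII set" where "MII_C = {NI1, NI2, D1, D2}"
fun MII_swap :: "spII \<Rightarrow> spII" where
  "MII_swap NI1 = NI2" | "MII_swap NI2 = NI1" | "MII_swap NE1 = NE2" |
  "MII_swap NE2 = NE1" | "MII_swap D1 = D2" | "MII_swap D2 = D1"

datatype spIV = Lam1 | Lam2 | Dg1 | Dg2

definition MIV_Rs1 :: "spIV set" where "MIV_Rs1 = {Lam1, Dg2}"
definition MIV_Rs2 :: "spIV set" where "MIV_Rs2 = {Lam2, Dg1}"
definition MIV_g1 :: "spIV \<Rightarrow> real" where
  "MIV_g1 s = (if s = Lam1 then -1 else if s = Lam2 then 1 else 0)"
definition MIV_g2 :: "spIV \<Rightarrow> real" where
  "MIV_g2 s = (if s = Lam1 then 1 else if s = Lam2 then -1 else 0)"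
definition MIV_C :: "spIV set" where "MIV_C = {Dg1, Dg2}"
fun MIV_swap :: "spIV \<Rightarrow> spIV" where
  "MIV_swap Lam1 = Lam2" | "MIV_swap Lam2 = Lam1" | "MIV_swap Dg1 = Dg2" | "MIV_swap Dg2 = Dg1"

datatype spV = L1 | L2 | NEv1 | NEv2

definition MV_Rs1 :: "spV set" where "MV_Rs1 = {L1, NEv1, L2}"
definition MV_Rs2 :: "spV set" where "MV_Rs2 = {L2, NEv2, L1}"
definition MV_g1 :: "spV \<Rightarrow> real" where
  "MV_g1 s = (if s = NEv1 then -1 else if s = NEv2 then 1 else 0)"
definition MV_g2 :: "spV \<Rightarrow> real" where
  "MV_g2 s = (if s = NEv1 then 1 else if s = NEv2 then -1 else 0)"
definition MV_C :: "spV set" where "MV_C = {L1, L2}"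
fun MV_swap :: "spV \<Rightarrow> spV" where
  "MV_swap L1 = L2" | "MV_swap L2 = L1" | "MV_swap NEv1 = NEv2" | "MV_swap NEv2 = NEv1"

end

theory Submission
  imports Defs
begin

text \<open>In all three networks the reactions only exchange mass between two species v1 and v2,
all other species are constant, and v1 is a reactant of reaction 1 only, v2 of reaction 2 only.
A steady state balances the two rates. Inside an invariant set, moving mass from v2 to v1
strictly increases the first rate and strictly decreases the second, so at most one point
balances them. The linearised version of this argument shows that the restricted Jacobian
multiplies the direction (1, -1) by -(a v1 + b v2) < 0, so it is never singular.\<close>

lemma monotone_chemical_strict_mono:
  assumes mc: "monotone_chemical Rs R" and s: "s \<in> Rs"
    and x: "positive_state x" and y: "positive_state y"
    and agree: "\<forall>t\<in>Rs - {s}. x t = y t" and less: "x s < y s"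
  shows "R x < R y"
proof -
  have indep: "\<And>x y. \<forall>t\<in>Rs. x t = y t \<Longrightarrow> R x = R y"
    and deriv: "\<And>x. \<forall>t. 0 < x t \<Longrightarrow>
        \<forall>t\<in>Rs. \<exists>d>0. ((\<lambda>u. R (x(t := u))) has_real_derivative d) (at (x t))"
    using mc unfolding monotone_chemical_def by blast+
  define f where "f u = R (x(s := u))" for u
  have "f (x s) < f (y s)"
  proof (rule DERIV_pos_imp_increasing[OF less])
    fix u assume "x s \<le> u" "u \<le> y s"
    then have "0 < u"
      using x unfolding positive_state_def by (meson order_less_le_trans)
    then have pos: "\<forall>t. 0 < (x(s := u)) t"
      using x unfolding positive_state_def by simp
    have "\<exists>d>0. ((\<lambda>v. R (x(s := v))) has_real_derivative d) (at u)"
      using bspec[OF deriv[of "x(s := u)", OF pos] s] by simp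
    then show "\<exists>d. (f has_real_derivative d) (at u) \<and> 0 < d"
      unfolding f_def by blast
  qed
  moreover have "f (x s) = R x" "f (y s) = R y"
    using indep agree by (auto simp: f_def)
  ultimately show ?thesis by simp
qed

lemma steady_state_rates_eq:
  assumes "steady_state g1 g2 R1 R2 x" and "g1 v = -1" and "g2 v = 1"
  shows "R1 x = R2 x"
  using fun_cong[OF assms(1)[unfolded steady_state_def rxn_ode_def], of v] assms(2,3) by simp

locale exchange_network =
  fixes Rs1 Rs2 :: "'a set" and g1 g2 :: "'a \<Rightarrow> real" and C :: "'a set" and v1 v2 :: 'a
  assumes finite_reactants: "finite Rs1" "finite Rs2"
    and v1_reactant: "v1 \<in> Rs1" "v1 \<notin> Rs2"
    and v2_reactant: "v2 \<in> Rs2" "v2 \<notin> Rs1"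
    and stoich_v1: "g1 v1 = -1" "g2 v1 = 1"
    and constant_species: "\<And>s. s \<notin> C \<Longrightarrow> s = v1 \<or> s = v2"
begin

lemma eq_if_same_invariant_set:
  assumes "same_invariant_set C v1 v2 x y" and "x v1 = y v1"
  shows "x = y"
proof
  fix s
  show "x s = y s"
    using assms constant_species[of s] unfolding same_invariant_set_def by auto
qed

lemma steady_state_unique:
  assumes mc1: "monotone_chemical Rs1 R1" and mc2: "monotone_chemical Rs2 R2"
    and x: "positive_state x" and y: "positive_state y"
    and ssx: "steady_state g1 g2 R1 R2 x" and ssy: "steady_state g1 g2 R1 R2 y"
    and inv: "same_invariant_set C v1 v2 x y"
  shows "x = y"
proof -
  have rates_x: "R1 x = R2 x" and rates_y: "R1 y = R2 y"
    using steady_state_rates_eq[OF ssx stoich_v1] steady_state_rates_eq[OF ssy stoich_v1] .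
  have outside: "x s = y s" if "s \<noteq> v1" "s \<noteq> v2" for s
    using inv constant_species[of s] that unfolding same_invariant_set_def by auto
  have sum: "x v1 + x v2 = y v1 + y v2"
    using inv unfolding same_invariant_set_def by simp
  have strict: "R1 p < R1 q \<and> R2 q < R2 p"
    if p: "positive_state p" and q: "positive_state q"
      and agree: "\<And>s. s \<noteq> v1 \<Longrightarrow> s \<noteq> v2 \<Longrightarrow> p s = q s"
      and sum': "p v1 + p v2 = q v1 + q v2" and less: "p v1 < q v1" for p q
  proof
    have "\<forall>t\<in>Rs1 - {v1}. p t = q t"
      using agree v2_reactant(2) by blast
    then show "R1 p < R1 q"
      using monotone_chemical_strict_mono[OF mc1 v1_reactant(1) p q] less by blast
    have "\<forall>t\<in>Rs2 - {v2}. q t = p t"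
      using agree v1_reactant(2) by (metis DiffE insertI1)
    moreover have "q v2 < p v2"
      using sum' less by linarith
    ultimately show "R2 q < R2 p"
      using monotone_chemical_strict_mono[OF mc2 v2_reactant(1) q p] by blast
  qed
  have "x v1 = y v1"
  proof (rule linorder_cases[of "x v1" "y v1"])
    assume "x v1 < y v1"
    then show ?thesis
      using strict[OF x y outside sum] rates_x rates_y by linarith
  next
    assume "y v1 < x v1"
    then show ?thesis
      using strict[OF y x outside[symmetric] sum[symmetric]] rates_x rates_y by linarith
  qed
  then show ?thesis using eq_if_same_invariant_set inv by blast
qed

lemma restricted_jacobian_nonsingular:
  assumes a: "\<forall>s\<in>Rs1. 0 < a s" and b: "\<forall>s\<in>Rs2. 0 < b s"
    and w_C: "\<forall>s\<in>C. w s = 0" and w_sum: "w v1 + w v2 = 0"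
    and kernel: "jac_apply g1 g2 Rs1 Rs2 a b w = (\<lambda>_. 0)"
  shows "w = (\<lambda>_. 0)"
proof -
  have w_outside: "w s = 0" if "s \<noteq> v1" "s \<noteq> v2" for s
    using w_C constant_species[of s] that by auto
  have "(\<Sum>t\<in>Rs1. a t * w t) = (\<Sum>t\<in>{v1}. a t * w t)"
    using v1_reactant(1) v2_reactant(2) w_outside
    by (intro sum.mono_neutral_right finite_reactants) force+
  moreover have "(\<Sum>t\<in>Rs2. b t * w t) = (\<Sum>t\<in>{v2}. b t * w t)"
    using v2_reactant(1) v1_reactant(2) w_outside
    by (intro sum.mono_neutral_right finite_reactants) force+
  ultimately have "- (a v1 * w v1) + b v2 * w v2 = 0"
    using fun_cong[OF kernel, of v1] stoich_v1 by (simp add: jac_apply_def)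
  moreover have "w v2 = - w v1"
    using w_sum by linarith
  ultimately have "(a v1 + b v2) * w v1 = 0"
    by (simp add: algebra_simps)
  moreover have "0 < a v1 + b v2"
    using a b v1_reactant v2_reactant by (simp add: add_pos_pos)
  ultimately have "w v1 = 0" by simp
  then show ?thesis
    using eq_if_same_invariant_set[of w "\<lambda>_. 0"] w_C w_sum
    unfolding same_invariant_set_def by simp
qed

lemma no_capacity_for_differentiation:
  "\<not> capacity_for_differentiation Rs1 Rs2 g1 g2 C v1 v2 \<sigma>"
  unfolding capacity_for_differentiation_def
  using restricted_jacobian_nonsingular by blast

end

interpretation MII: exchange_network MII_Rs1 MII_Rs2 MII_g1 MII_g2 MII_C NE1 NE2
proof
  fix s
  assume "s \<notin> MII_C"
  then show "s = NE1 \<or> s = NE2"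
    by (cases s) (auto simp: MII_C_def)
qed (auto simp: MII_Rs1_def MII_Rs2_def MII_g1_def MII_g2_def)

interpretation MIV: exchange_network MIV_Rs1 MIV_Rs2 MIV_g1 MIV_g2 MIV_C Lam1 Lam2
proof
  fix s
  assume "s \<notin> MIV_C"
  then show "s = Lam1 \<or> s = Lam2"
    by (cases s) (auto simp: MIV_C_def)
qed (auto simp: MIV_Rs1_def MIV_Rs2_def MIV_g1_def MIV_g2_def)

interpretation MV: exchange_network MV_Rs1 MV_Rs2 MV_g1 MV_g2 MV_C NEv1 NEv2
proof
  fix s
  assume "s \<notin> MV_C"
  then show "s = NEv1 \<or> s = NEv2"
    by (cases s) (auto simp: MV_C_def)
qed (auto simp: MV_Rs1_def MV_Rs2_def MV_g1_def MV_g2_def)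

theorem proposition4p2:
  shows
  "(\<forall>R1 R2. monotone_chemical MII_Rs1 R1 \<longrightarrow> monotone_chemical MII_Rs2 R2 \<longrightarrow>
      (\<forall>x y. positive_state x \<longrightarrow> positive_state y \<longrightarrow>
         steady_state MII_g1 MII_g2 R1 R2 x \<longrightarrow> steady_state MII_g1 MII_g2 R1 R2 y \<longrightarrow>
         same_invariant_set MII_C NE1 NE2 x y \<longrightarrow> x = y)) \<and>
   (\<forall>R1 R2. monotone_chemical MIV_Rs1 R1 \<longrightarrow> monotone_chemical MIV_Rs2 R2 \<longrightarrow>
      (\<forall>x y. positive_state x \<longrightarrow> positive_state y \<longrightarrow>
         steady_state MIV_g1 MIV_g2 R1 R2 x \<longrightarrow> steady_state MIV_g1 MIV_g2 R1 R2 y \<longrightarrow>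
         same_invariant_set MIV_C Lam1 Lam2 x y \<longrightarrow> x = y)) \<and>
   (\<forall>R1 R2. monotone_chemical MV_Rs1 R1 \<longrightarrow> monotone_chemical MV_Rs2 R2 \<longrightarrow>
      (\<forall>x y. positive_state x \<longrightarrow> positive_state y \<longrightarrow>
         steady_state MV_g1 MV_g2 R1 R2 x \<longrightarrow> steady_state MV_g1 MV_g2 R1 R2 y \<longrightarrow>
         same_invariant_set MV_C NEv1 NEv2 x y \<longrightarrow> x = y)) \<and>
   \<not> capacity_for_differentiation MII_Rs1 MII_Rs2 MII_g1 MII_g2 MII_C NE1 NE2 MII_swap \<and>
   \<not> capacity_for_differentiation MIV_Rs1 MIV_Rs2 MIV_g1 MIV_g2 MIV_C Lam1 Lam2 MIV_swap \<and>
   \<not> capacity_for_differentiation MV_Rs1 MV_Rs2 MV_g1 MV_g2 MV_C NEv1 NEv2 MV_swap"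
  by (intro conjI allI impI MII.steady_state_unique MIV.steady_state_unique MV.steady_state_unique
      MII.no_capacity_for_differentiation MIV.no_capacity_for_differentiation
      MV.no_capacity_for_differentiation)

end
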